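(* Let $\mathcal{M}_i=(E_i,\rho_i)$, $i=1,2,3$, be $q$-matroids. Then, on the ground space $E_1\oplus E_2\oplus E_3$, $(\mathcal{M}_1\oplus\mathcal{M}_2)\oplus\mathcal{M}_3=\mathcal{M}_1\oplus(\mathcal{M}_2\oplus\mathcal{M}_3)$.
   Context: Let $\mathbb{F}=\mathbb{F}_q$. A $q$-matroid is $\mathcal{M}=(E,\rho)$, $E$ a finite-dimensional $\mathbb{F}$-vector space, $\rho$ from subspaces to $\mathbb{Z}_{\ge0}$ with $0\le\rho(V)\le\dim V$, monotone and submodular. Direct sum: for $q$-matroids $(E_1,\rho_1),(E_2,\rho_2)$ and $E=E_1\oplus E_2$ (each $E_i$ identified with its image) with projections $\pi_i:E\to E_i$, $\mathcal{M}_1\oplus\mathcal{M}_2=(E,\rho)$ where $\rho(V)=\dim V+\min_{X\le V}(\rho_1(\pi_1(X))+\rho_2(\pi_2(X))-\dim X)$. *)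

theory Defs
  imports "HOL-Analysis.Analysis"
begin

text \<open>Ground spaces are F^n, modelled as 'f^'n with 'f a finite field and 'n a finite index
type. A rank function is a map from sets of vectors to nat; the axioms are imposed on subspaces.\<close>

definition qmatroid :: "((('f::{field,finite})^('n::finite)) set \<Rightarrow> nat) \<Rightarrow> bool" where
  "qmatroid \<rho> \<longleftrightarrow>
     (\<forall>V. vec.subspace V \<longrightarrow> \<rho> V \<le> vec.dim V) \<and>
     (\<forall>U V. vec.subspace U \<and> vec.subspace V \<and> U \<subseteq> V \<longrightarrow> \<rho> U \<le> \<rho> V) \<and>
     (\<forall>U V. vec.subspace U \<and> vec.subspace V \<longrightarrow>
        \<rho> (vec.span (U \<union> V)) + \<rho> (U \<inter> V) \<le> \<rho> U + \<rho> V)"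

definition proj1 :: "'f^(('n1::finite) + ('n2::finite)) \<Rightarrow> 'f^'n1" where
  "proj1 x = (\<chi> i. x $ Inl i)"

definition proj2 :: "'f^(('n1::finite) + ('n2::finite)) \<Rightarrow> 'f^'n2" where
  "proj2 x = (\<chi> i. x $ Inr i)"

definition qm_dsum ::
  "((('f::{field,finite})^('n1::finite)) set \<Rightarrow> nat) \<Rightarrow> (('f^('n2::finite)) set \<Rightarrow> nat)
     \<Rightarrow> (('f^('n1 + 'n2)) set \<Rightarrow> nat)" where
  "qm_dsum \<rho>1 \<rho>2 V =
     nat (int (vec.dim V) +
          Min {int (\<rho>1 (proj1 ` X)) + int (\<rho>2 (proj2 ` X)) - int (vec.dim X)
               | X. vec.subspace X \<and> X \<subseteq> V})"

definition reassoc :: "'f^((('n1::finite) + ('n2::finite)) + ('n3::finite)) \<Rightarrow> 'f^('n1 + ('n2 + 'n3))" where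
  "reassoc x = (\<chi> i. x $ (case i of Inl a \<Rightarrow> Inl (Inl a)
                                 | Inr (Inl b) \<Rightarrow> Inl (Inr b)
                                 | Inr (Inr c) \<Rightarrow> Inr c))"

end

theory Submission
  imports Defs
begin

(* Write rho_P(V) = induced_rank P V = dim V + min_{X <= V} (P X - dim X).  Both sides of the
   identity equal rho_T(V) for T X = rho1(pi1 pi1 X) + rho2(pi2 pi1 X) + rho3(pi2 X), so the inner direct sum
   can be absorbed into the outer one.  The key point is that for linear g and monotone Q,
   a minimiser Z <= g X of the inner expression rho_P(g X) lifts to W = X Int g^-1(Z): W has the
   same kernel under g as X, so rank-nullity gives dim X - dim g X = dim W - dim Z, while
   Q W <= Q X.  Hence only the monotonicity of rho1 and rho3 is used. *)

context finite_dimensional_vector_space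
begin

lemma exists_complement_subspace:
  assumes K: "subspace K" and S: "subspace S" and "K \<subseteq> S"
  obtains C where "subspace C" "C \<subseteq> S" "C \<inter> K = {0}" "S = {x + y | x y. x \<in> C \<and> y \<in> K}"
proof -
  obtain BK where BK: "BK \<subseteq> K" "independent BK" "K \<subseteq> span BK" "card BK = dim K"
    using basis_exists by blast
  have "BK \<subseteq> S"
    using BK(1) \<open>K \<subseteq> S\<close> by blast
  then obtain B where B: "BK \<subseteq> B" "B \<subseteq> S" "independent B" "S \<subseteq> span B"
    using maximal_independent_subset_extend BK(2) by blast
  define C where "C = span (B - BK)"
  have C: "subspace C"
    by (simp add: C_def)
  have spanBK: "span BK = K"
    using span_minimal[OF BK(1) K] BK(3) by (rule subset_antisym)
  have "(B - BK) \<union> BK = B"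
    using B(1) by blast
  then have sum_eq: "{x + y | x y. x \<in> C \<and> y \<in> K} = span B"
    unfolding C_def using span_Un[of "B - BK" BK] spanBK by simp
  have "finite B"
    using B(3) finiteI_independent by blast
  have "dim (span B) = card B"
    by (rule dim_span_eq_card_independent[OF B(3)])
  also have "\<dots> = card (B - BK) + card BK"
    using card_Diff_subset[OF finite_subset[OF B(1) \<open>finite B\<close>] B(1)] card_mono[OF \<open>finite B\<close> B(1)]
    by simp
  also have "card (B - BK) = dim C"
    unfolding C_def using independent_mono[OF B(3), of "B - BK"]
    by (simp add: dim_span_eq_card_independent del: dim_span)
  also note BK(4)
  finally have "dim (C \<inter> K) = 0"
    using dim_sums_Int[OF C K] unfolding sum_eq by linarith
  moreover have "0 \<in> C \<inter> K"
    using C K subspace_0 by blast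
  moreover have "span B \<subseteq> S"
    using B(2) S span_minimal by blast
  then have "S = {x + y | x y. x \<in> C \<and> y \<in> K}"
    using sum_eq B(4) by blast
  moreover have "C \<subseteq> S"
    using \<open>span B \<subseteq> S\<close> span_mono[of "B - BK" B] unfolding C_def by blast
  ultimately show ?thesis
    using that[OF C] by auto
qed

end

context finite_dimensional_vector_space_pair_1
begin

lemma dim_image_add_dim_kernel:
  assumes f: "Vector_Spaces.linear s1 s2 f" and S: "vs1.subspace S"
  shows "vs2.dim (f ` S) + vs1.dim {x \<in> S. f x = 0} = vs1.dim S"
proof -
  define K where "K = {x \<in> S. f x = 0}"
  have "K = S \<inter> {x. f x = 0}"
    by (auto simp: K_def)
  then have K: "vs1.subspace K"
    using vs1.subspace_inter[OF S linear_subspace_kernel[OF f]] by simp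
  have "K \<subseteq> S"
    by (auto simp: K_def)
  then obtain C where C: "vs1.subspace C" "C \<subseteq> S" "C \<inter> K = {0}" "S = {x + y | x y. x \<in> C \<and> y \<in> K}"
    by (rule vs1.exists_complement_subspace[OF K S])
  have "inj_on f C"
    using linear_inj_on_iff_eq_0[OF f C(1)] C(2,3) by (auto simp: K_def)
  then have "vs2.dim (f ` C) = vs1.dim C"
    using dim_image_eq[OF f, of C] vs1.span_eq_iff[THEN iffD2, OF C(1)] by simp
  moreover have "f ` S = f ` C"
  proof
    show "f ` S \<subseteq> f ` C"
    proof
      fix z assume "z \<in> f ` S"
      then obtain x y where "x \<in> C" "y \<in> K" "z = f (x + y)"
        unfolding C(4) by blast
      then show "z \<in> f ` C"
        using linear_add[OF f] by (auto simp: K_def)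
    qed
  qed (use C(2) in blast)
  moreover have "vs1.dim C + vs1.dim K = vs1.dim S"
    using vs1.dim_sums_Int[OF C(1) K] unfolding C(3) C(4)[symmetric] by simp
  ultimately show ?thesis
    by (simp add: K_def)
qed

lemma preimage_subspace_exists:
  assumes g: "Vector_Spaces.linear s1 s2 g" and X: "vs1.subspace X"
    and Z: "vs2.subspace Z" "Z \<subseteq> g ` X"
  obtains W where "vs1.subspace W" "W \<subseteq> X" "g ` W = Z"
    "vs1.dim W + vs2.dim (g ` X) = vs1.dim X + vs2.dim Z"
proof
  let ?W = "{x \<in> X. g x \<in> Z}"
  have "?W = X \<inter> g -` Z"
    by blast
  then show W: "vs1.subspace ?W"
    using vs1.subspace_inter[OF X linear_subspace_vimage[OF g Z(1)]] by simp
  show "?W \<subseteq> X"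
    by blast
  show gW: "g ` ?W = Z"
    using Z(2) by blast
  have "{x \<in> ?W. g x = 0} = {x \<in> X. g x = 0}"
    using vs2.subspace_0[OF Z(1)] by auto
  then show "vs1.dim ?W + vs2.dim (g ` X) = vs1.dim X + vs2.dim Z"
    using dim_image_add_dim_kernel[OF g W] dim_image_add_dim_kernel[OF g X] gW by simp
qed

end

lemma Min_subspaces_le:
  fixes F :: "('f::{field,finite}^'n::finite) set \<Rightarrow> 'a::linorder"
  assumes "vec.subspace X" "X \<subseteq> V"
  shows "Min {F Y | Y. vec.subspace Y \<and> Y \<subseteq> V} \<le> F X"
  using assms by (intro Min_le) auto

lemma Min_subspaces_attained:
  fixes F :: "('f::{field,finite}^'n::finite) set \<Rightarrow> 'a::linorder"
  assumes "vec.subspace V"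
  obtains X where "vec.subspace X" "X \<subseteq> V" "Min {F Y | Y. vec.subspace Y \<and> Y \<subseteq> V} = F X"
proof -
  have "{0} \<subseteq> V"
    using vec.subspace_0[OF assms] by blast
  then have "Min {F Y | Y. vec.subspace Y \<and> Y \<subseteq> V} \<in> {F Y | Y. vec.subspace Y \<and> Y \<subseteq> V}"
    by (intro Min_in) (auto intro!: exI[of _ "{0}"])
  then show ?thesis
    using that by blast
qed

lemma Min_subspaces_eqI:
  fixes F G :: "('f::{field,finite}^'n::finite) set \<Rightarrow> 'a::linorder"
  assumes V: "vec.subspace V"
    and F_ge: "\<And>X. vec.subspace X \<Longrightarrow> X \<subseteq> V \<Longrightarrow> \<exists>Y. vec.subspace Y \<and> Y \<subseteq> V \<and> G Y \<le> F X"
    and G_ge: "\<And>Y. vec.subspace Y \<Longrightarrow> Y \<subseteq> V \<Longrightarrow> \<exists>X. vec.subspace X \<and> X \<subseteq> V \<and> F X \<le> G Y"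
  shows "Min {F X | X. vec.subspace X \<and> X \<subseteq> V} = Min {G Y | Y. vec.subspace Y \<and> Y \<subseteq> V}"
proof (rule antisym)
  obtain Y where Y: "vec.subspace Y" "Y \<subseteq> V" "Min {G Y | Y. vec.subspace Y \<and> Y \<subseteq> V} = G Y"
    by (rule Min_subspaces_attained[OF V])
  obtain X where "vec.subspace X" "X \<subseteq> V" "F X \<le> G Y"
    using G_ge[OF Y(1,2)] by blast
  then show "Min {F X | X. vec.subspace X \<and> X \<subseteq> V} \<le> Min {G Y | Y. vec.subspace Y \<and> Y \<subseteq> V}"
    using Min_subspaces_le[of X V F] Y(3) by simp
next
  obtain X where X: "vec.subspace X" "X \<subseteq> V" "Min {F X | X. vec.subspace X \<and> X \<subseteq> V} = F X"
    by (rule Min_subspaces_attained[OF V])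
  obtain Y where "vec.subspace Y" "Y \<subseteq> V" "G Y \<le> F X"
    using F_ge[OF X(1,2)] by blast
  then show "Min {G Y | Y. vec.subspace Y \<and> Y \<subseteq> V} \<le> Min {F X | X. vec.subspace X \<and> X \<subseteq> V}"
    using Min_subspaces_le[of Y V G] X(3) by simp
qed

definition induced_rank :: "(('f::{field,finite}^'n::finite) set \<Rightarrow> int) \<Rightarrow> ('f^'n) set \<Rightarrow> int" where
  "induced_rank P V = int (vec.dim V) + Min {P X - int (vec.dim X) | X. vec.subspace X \<and> X \<subseteq> V}"

lemma induced_rank_le: "vec.subspace V \<Longrightarrow> induced_rank P V \<le> P V"
  using Min_subspaces_le[of V V "\<lambda>X. P X - int (vec.dim X)"] by (simp add: induced_rank_def)

lemma induced_rank_nonneg: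
  assumes "\<And>X. 0 \<le> P X" and V: "vec.subspace V"
  shows "0 \<le> induced_rank P V"
proof -
  obtain X where X: "vec.subspace X" "X \<subseteq> V"
      "Min {P X - int (vec.dim X) | X. vec.subspace X \<and> X \<subseteq> V} = P X - int (vec.dim X)"
    by (rule Min_subspaces_attained[OF V])
  have "vec.dim X \<le> vec.dim V"
    using vec.dim_subset[OF X(2)] .
  then show ?thesis
    using assms(1)[of X] X(3) by (simp add: induced_rank_def)
qed

lemma induced_rank_cong:
  assumes "\<And>X. vec.subspace X \<Longrightarrow> X \<subseteq> V \<Longrightarrow> P X = Q X"
  shows "induced_rank P V = induced_rank Q V"
proof -
  have "{P X - int (vec.dim X) | X. vec.subspace X \<and> X \<subseteq> V}
      = {Q X - int (vec.dim X) | X. vec.subspace X \<and> X \<subseteq> V}"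
    using assms by force
  then show ?thesis
    by (simp add: induced_rank_def)
qed

lemma induced_rank_nested:
  fixes g :: "'f::{field,finite}^'v::finite \<Rightarrow> 'f^'w::finite"
    and P :: "('f^'w) set \<Rightarrow> int" and Q :: "('f^'v) set \<Rightarrow> int"
  assumes g: "Vector_Spaces.linear (*s) (*s) g" and V: "vec.subspace V"
    and Q_mono: "\<And>X Y. vec.subspace X \<Longrightarrow> vec.subspace Y \<Longrightarrow> X \<subseteq> Y \<Longrightarrow> Q X \<le> Q Y"
  shows "induced_rank (\<lambda>X. induced_rank P (g ` X) + Q X) V = induced_rank (\<lambda>X. P (g ` X) + Q X) V"
proof -
  have "Min {induced_rank P (g ` X) + Q X - int (vec.dim X) | X. vec.subspace X \<and> X \<subseteq> V}
      = Min {P (g ` W) + Q W - int (vec.dim W) | W. vec.subspace W \<and> W \<subseteq> V}"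
  proof (rule Min_subspaces_eqI[OF V])
    fix X assume X: "vec.subspace X" "X \<subseteq> V"
    have gX: "vec.subspace (g ` X)"
      using vec.linear_subspace_image[OF g X(1)] .
    obtain Z where Z: "vec.subspace Z" "Z \<subseteq> g ` X"
      "Min {P Z - int (vec.dim Z) | Z. vec.subspace Z \<and> Z \<subseteq> g ` X} = P Z - int (vec.dim Z)"
      by (rule Min_subspaces_attained[OF gX])
    obtain W where W: "vec.subspace W" "W \<subseteq> X" "g ` W = Z"
      "vec.dim W + vec.dim (g ` X) = vec.dim X + vec.dim Z"
      by (rule vec.preimage_subspace_exists[OF g X(1) Z(1,2)])
    have "Q W \<le> Q X"
      using Q_mono[OF W(1) X(1) W(2)] .
    then have "P (g ` W) + Q W - int (vec.dim W) \<le> induced_rank P (g ` X) + Q X - int (vec.dim X)"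
      using W(3,4) Z(3) by (simp add: induced_rank_def)
    then show "\<exists>W. vec.subspace W \<and> W \<subseteq> V \<and>
        P (g ` W) + Q W - int (vec.dim W) \<le> induced_rank P (g ` X) + Q X - int (vec.dim X)"
      using W(1,2) X(2) by blast
  next
    fix W assume W: "vec.subspace W" "W \<subseteq> V"
    then have "induced_rank P (g ` W) \<le> P (g ` W)"
      using induced_rank_le vec.linear_subspace_image[OF g] by blast
    then show "\<exists>X. vec.subspace X \<and> X \<subseteq> V \<and>
        induced_rank P (g ` X) + Q X - int (vec.dim X) \<le> P (g ` W) + Q W - int (vec.dim W)"
      using W by force
  qed
  then show ?thesis
    unfolding induced_rank_def[of "\<lambda>X. induced_rank P (g ` X) + Q X" V]
      induced_rank_def[of "\<lambda>X. P (g ` X) + Q X" V] by simp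
qed

lemma induced_rank_linear_image:
  fixes f :: "'f::{field,finite}^'m::finite \<Rightarrow> 'f^'n::finite"
  assumes f: "Vector_Spaces.linear (*s) (*s) f" and "inj f"
  shows "induced_rank P (f ` V) = induced_rank (\<lambda>X. P (f ` X)) V"
proof -
  have dim_f: "vec.dim (f ` X) = vec.dim X" for X
    using vec.dim_image_eq[OF f] inj_on_subset[OF \<open>inj f\<close>] by blast
  have subspaces: "{Y. vec.subspace Y \<and> Y \<subseteq> f ` V} = (\<lambda>X. f ` X) ` {X. vec.subspace X \<and> X \<subseteq> V}"
  proof (intro equalityI subsetI)
    fix Y assume Y: "Y \<in> {Y. vec.subspace Y \<and> Y \<subseteq> f ` V}"
    then have "Y = f ` (f -` Y)" "f -` Y \<subseteq> V"
      using injD[OF \<open>inj f\<close>] by blast+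
    moreover have "vec.subspace (f -` Y)"
      using vec.linear_subspace_vimage[OF f] Y by blast
    ultimately show "Y \<in> (\<lambda>X. f ` X) ` {X. vec.subspace X \<and> X \<subseteq> V}"
      by blast
  qed (auto intro: vec.linear_subspace_image[OF f])
  have "{P Y - int (vec.dim Y) | Y. vec.subspace Y \<and> Y \<subseteq> f ` V}
      = (\<lambda>Y. P Y - int (vec.dim Y)) ` {Y. vec.subspace Y \<and> Y \<subseteq> f ` V}"
    by blast
  also have "\<dots> = (\<lambda>X. P (f ` X) - int (vec.dim X)) ` {X. vec.subspace X \<and> X \<subseteq> V}"
    by (simp add: subspaces image_image dim_f)
  also have "\<dots> = {P (f ` X) - int (vec.dim X) | X. vec.subspace X \<and> X \<subseteq> V}"
    by blast
  finally show ?thesis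
    by (simp add: induced_rank_def dim_f)
qed

lemma linear_proj1: "Vector_Spaces.linear (*s) (*s) (proj1 :: 'f::field^('n1::finite + 'n2::finite) \<Rightarrow> _)"
  unfolding Vector_Spaces.linear_iff by (auto simp: proj1_def vec_eq_iff vec.vector_space_axioms)

lemma linear_proj2: "Vector_Spaces.linear (*s) (*s) (proj2 :: 'f::field^('n1::finite + 'n2::finite) \<Rightarrow> _)"
  unfolding Vector_Spaces.linear_iff by (auto simp: proj2_def vec_eq_iff vec.vector_space_axioms)

lemma linear_reassoc:
  "Vector_Spaces.linear (*s) (*s) (reassoc :: 'f::field^(('n1::finite + 'n2::finite) + 'n3::finite) \<Rightarrow> _)"
  unfolding Vector_Spaces.linear_iff
  by (auto simp: reassoc_def vec_eq_iff vec.vector_space_axioms split: sum.splits)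

lemma proj1_reassoc [simp]: "proj1 (reassoc x) = proj1 (proj1 x)"
  by (simp add: proj1_def reassoc_def vec_eq_iff)

lemma proj1_proj2_reassoc [simp]: "proj1 (proj2 (reassoc x)) = proj2 (proj1 x)"
  by (simp add: proj1_def proj2_def reassoc_def vec_eq_iff)

lemma proj2_proj2_reassoc [simp]: "proj2 (proj2 (reassoc x)) = proj2 x"
  by (simp add: proj2_def reassoc_def vec_eq_iff)

lemma inj_reassoc: "inj reassoc"
proof (rule injI)
  fix x y :: "'f^(('n1::finite + 'n2::finite) + 'n3::finite)"
  assume eq: "reassoc x = reassoc y"
  have projs: "proj1 (proj1 x) = proj1 (proj1 y)" "proj2 (proj1 x) = proj2 (proj1 y)" "proj2 x = proj2 y"
    using arg_cong[OF eq, of proj1] arg_cong[OF eq, of "\<lambda>v. proj1 (proj2 v)"]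
      arg_cong[OF eq, of "\<lambda>v. proj2 (proj2 v)"] by simp_all
  have "x $ i = y $ i" for i
  proof (cases i)
    case (Inl a)
    then show ?thesis
      using projs(1,2) by (cases a) (simp_all add: vec_eq_iff proj1_def proj2_def)
  next
    case (Inr c)
    then show ?thesis
      using projs(3) by (simp add: vec_eq_iff proj2_def)
  qed
  then show "x = y"
    by (simp add: vec_eq_iff)
qed

lemma qmatroid_mono_image:
  fixes \<rho> :: "('f::{field,finite}^'n::finite) set \<Rightarrow> nat" and h :: "'f^'m::finite \<Rightarrow> 'f^'n"
  assumes "qmatroid \<rho>" and "Vector_Spaces.linear (*s) (*s) h"
    and "vec.subspace X" "vec.subspace Y" "X \<subseteq> Y"
  shows "\<rho> (h ` X) \<le> \<rho> (h ` Y)"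
  using assms vec.linear_subspace_image[OF assms(2)] unfolding qmatroid_def by (meson image_mono)

lemma qm_dsum_eq_induced_rank:
  "qm_dsum \<rho>1 \<rho>2 V = nat (induced_rank (\<lambda>X. int (\<rho>1 (proj1 ` X)) + int (\<rho>2 (proj2 ` X))) V)"
  by (simp add: qm_dsum_def induced_rank_def)

lemma int_qm_dsum:
  "vec.subspace V \<Longrightarrow>
    int (qm_dsum \<rho>1 \<rho>2 V) = induced_rank (\<lambda>X. int (\<rho>1 (proj1 ` X)) + int (\<rho>2 (proj2 ` X))) V"
  by (simp add: qm_dsum_eq_induced_rank induced_rank_nonneg)

lemma qm_dsum_nested_left:
  fixes \<rho>1 :: "(('f::{field,finite})^('n1::finite)) set \<Rightarrow> nat"
    and \<rho>2 :: "('f^('n2::finite)) set \<Rightarrow> nat"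
    and \<rho>3 :: "('f^('n3::finite)) set \<Rightarrow> nat"
  assumes "qmatroid \<rho>3" and V: "vec.subspace V"
  shows "qm_dsum (qm_dsum \<rho>1 \<rho>2) \<rho>3 V = nat (induced_rank (\<lambda>X.
    int (\<rho>1 (proj1 ` proj1 ` X)) + int (\<rho>2 (proj2 ` proj1 ` X)) + int (\<rho>3 (proj2 ` X))) V)"
proof -
  let ?P12 = "\<lambda>Y. int (\<rho>1 (proj1 ` Y)) + int (\<rho>2 (proj2 ` Y))"
  have "qm_dsum (qm_dsum \<rho>1 \<rho>2) \<rho>3 V
      = nat (induced_rank (\<lambda>X. induced_rank ?P12 (proj1 ` X) + int (\<rho>3 (proj2 ` X))) V)"
    unfolding qm_dsum_eq_induced_rank[of "qm_dsum \<rho>1 \<rho>2" \<rho>3 V]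
    by (intro arg_cong[where f = nat] induced_rank_cong)
      (simp add: int_qm_dsum vec.linear_subspace_image[OF linear_proj1])
  also have "\<dots> = nat (induced_rank (\<lambda>X. ?P12 (proj1 ` X) + int (\<rho>3 (proj2 ` X))) V)"
    by (intro arg_cong[where f = nat] induced_rank_nested[OF linear_proj1 V])
      (simp add: qmatroid_mono_image[OF assms(1) linear_proj2])
  finally show ?thesis .
qed

lemma qm_dsum_nested_right:
  fixes \<rho>1 :: "(('f::{field,finite})^('n1::finite)) set \<Rightarrow> nat"
    and \<rho>2 :: "('f^('n2::finite)) set \<Rightarrow> nat"
    and \<rho>3 :: "('f^('n3::finite)) set \<Rightarrow> nat"
  assumes "qmatroid \<rho>1" and V: "vec.subspace V"
  shows "qm_dsum \<rho>1 (qm_dsum \<rho>2 \<rho>3) (reassoc ` V) = nat (induced_rank (\<lambda>X.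
    int (\<rho>1 (proj1 ` proj1 ` X)) + int (\<rho>2 (proj2 ` proj1 ` X)) + int (\<rho>3 (proj2 ` X))) V)"
proof -
  let ?P23 = "\<lambda>Y. int (\<rho>2 (proj1 ` Y)) + int (\<rho>3 (proj2 ` Y))"
  let ?U = "reassoc ` V"
  have U: "vec.subspace ?U"
    using vec.linear_subspace_image[OF linear_reassoc V] .
  have "qm_dsum \<rho>1 (qm_dsum \<rho>2 \<rho>3) ?U
      = nat (induced_rank (\<lambda>X. induced_rank ?P23 (proj2 ` X) + int (\<rho>1 (proj1 ` X))) ?U)"
    unfolding qm_dsum_eq_induced_rank[of \<rho>1 "qm_dsum \<rho>2 \<rho>3" ?U]
    by (intro arg_cong[where f = nat] induced_rank_cong)
      (simp add: int_qm_dsum vec.linear_subspace_image[OF linear_proj2] add.commute)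
  also have "\<dots> = nat (induced_rank (\<lambda>X. ?P23 (proj2 ` X) + int (\<rho>1 (proj1 ` X))) ?U)"
    by (intro arg_cong[where f = nat] induced_rank_nested[OF linear_proj2 U])
      (simp add: qmatroid_mono_image[OF assms(1) linear_proj1])
  also have "\<dots> = nat (induced_rank (\<lambda>X. ?P23 (proj2 ` reassoc ` X) + int (\<rho>1 (proj1 ` reassoc ` X))) V)"
    by (simp add: induced_rank_linear_image[OF linear_reassoc inj_reassoc])
  finally show ?thesis
    by (simp add: image_image add_ac)
qed

theorem corollary6p3:
  fixes \<rho>1 :: "(('f::{field,finite})^('n1::finite)) set \<Rightarrow> nat"
    and \<rho>2 :: "('f^('n2::finite)) set \<Rightarrow> nat"
    and \<rho>3 :: "('f^('n3::finite)) set \<Rightarrow> nat"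
  assumes "qmatroid \<rho>1" and "qmatroid \<rho>2" and "qmatroid \<rho>3"
  shows "\<forall>V :: ('f^(('n1 + 'n2) + 'n3)) set. vec.subspace V \<longrightarrow>
           qm_dsum (qm_dsum \<rho>1 \<rho>2) \<rho>3 V = qm_dsum \<rho>1 (qm_dsum \<rho>2 \<rho>3) (reassoc ` V)"
proof (intro allI impI)
  fix V :: "('f^(('n1 + 'n2) + 'n3)) set"
  assume V: "vec.subspace V"
  show "qm_dsum (qm_dsum \<rho>1 \<rho>2) \<rho>3 V = qm_dsum \<rho>1 (qm_dsum \<rho>2 \<rho>3) (reassoc ` V)"
    unfolding qm_dsum_nested_left[OF assms(3) V] qm_dsum_nested_right[OF assms(1) V] ..
qed

end
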